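(* Let $D$ be a positive integer that is not a perfect square, and let $L_j$ ($j\in\mathbb{Z}$) be the simple equivalence matrices of the principal cycle of determinant $D$. Then: (i) For $j>0$ the entries of $L_j$ have the (weak) sign patterns $\begin{pmatrix}+&+\\+&+\end{pmatrix}$, $\begin{pmatrix}-&+\\-&+\end{pmatrix}$, $\begin{pmatrix}-&-\\-&-\end{pmatrix}$, $\begin{pmatrix}+&-\\+&-\end{pmatrix}$ according as $j\equiv0,1,2,3\pmod 4$, where $+$ means the entry is $\ge0$ and $-$ means it is $\le0$. (ii) For $j>0$, $|L_j|=|S^{(1)}|\cdots|S^{(j)}|$ and $|L_{-j}|=|S^{(-j)}|\cdots|S^{(-1)}|$. (iii) For every integer $j$ with $|j|\ge2$, writing $L_j=(l_{ik})$, we have $1\le \dfrac{\max_{i,k}|l_{ik}|}{\min_{i,k}|l_{ik}|}\le 4(D+\sqrt D)$.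
   Context: Forms: $Q=[a,2b,c]$ means $ax_1^2+2bx_1x_2+cx_2^2$ ($a,b,c\in\mathbb{Z}$), with matrix $\begin{pmatrix} a&b\\ b&c\end{pmatrix}$ and determinant $b^2-ac$. A form of determinant $D$ is reduced if $0<b<\sqrt D$ and $\sqrt D-b<|a|<\sqrt D+b$. The reduced identity form is $\tilde I=[1,2\lambda,\lambda^2-D]$, $\lambda=\lfloor\sqrt D\rfloor$. For a reduced form $Q_1=[a_1,2b_1,c_1]$, let $S=\begin{pmatrix}0&1\\-1&\mu\end{pmatrix}$ where $\mu$ is the integer with $-\sqrt D-b_1<\mu c_1<-\sqrt D-b_1+|c_1|$; the right neighbor of $Q_1$ is the reduced form $S^tQ_1S$. Put $Q^{(0)}=\tilde I$, let $Q^{(j)}$ be the right neighbor of $Q^{(j-1)}$ and $S^{(j)}$ the matrix $S$ taking $Q^{(j-1)}$ to $Q^{(j)}$ ($j\ge1$). The sequence $Q^{(j)}$ is periodic with least period $2p$. For $j\ge1$, $L_j=S^{(1)}\cdots S^{(j)}$, and $L_0$ is the identity. For negative $j$, $S^{(j)}=(S^{(j_0)})^{-1}$ where $j\equiv j_0\pmod{2p}$, $0<j_0\le 2p$, and for $j>0$, $L_{-j}=S^{(-j)}\cdots S^{(-1)}$. For a matrix $M=(m_{ik})$, $|M|=(|m_{ik}|)$ denotes the entrywise absolute value. *)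

theory Defs
  imports "HOL-Analysis.Analysis"
begin

(* 2x2 integer matrices are int^2^2; entries M $ i $ k with i,k in {1,2}. *)
definition mat2 :: "int \<Rightarrow> int \<Rightarrow> int \<Rightarrow> int \<Rightarrow> int^2^2" where
  "mat2 a b c d = (\<chi> i k. if i = 1 then (if k = 1 then a else b) else (if k = 1 then c else d))"

(* A binary quadratic form [a,2b,c] is represented by its symmetric matrix mat2 a b b c.
   Its determinant (paper convention) is b^2 - ac. *)
definition form_det :: "int^2^2 \<Rightarrow> int" where
  "form_det Q = (Q $ 1 $ 2)^2 - Q $ 1 $ 1 * Q $ 2 $ 2"

definition ident_form :: "int \<Rightarrow> int^2^2" where
  "ident_form D = (let l = \<lfloor>sqrt (real_of_int D)\<rfloor> in mat2 1 l l (l^2 - D))"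

definition nbr_mu :: "int \<Rightarrow> int^2^2 \<Rightarrow> int" where
  "nbr_mu D Q = (THE \<mu>::int.
      - sqrt (real_of_int D) - Q $ 1 $ 2 < real_of_int (\<mu> * Q $ 2 $ 2) \<and>
      real_of_int (\<mu> * Q $ 2 $ 2) < - sqrt (real_of_int D) - Q $ 1 $ 2 + \<bar>Q $ 2 $ 2\<bar>)"

definition nbr_S :: "int \<Rightarrow> int^2^2 \<Rightarrow> int^2^2" where
  "nbr_S D Q = mat2 0 1 (-1) (nbr_mu D Q)"

definition right_nbr :: "int \<Rightarrow> int^2^2 \<Rightarrow> int^2^2" where
  "right_nbr D Q = transpose (nbr_S D Q) ** Q ** nbr_S D Q"

definition Qseq :: "int \<Rightarrow> nat \<Rightarrow> int^2^2" where
  "Qseq D j = (right_nbr D ^^ j) (ident_form D)"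

(* least period (= 2p) of the sequence Q^(j) *)
definition cyc_len :: "int \<Rightarrow> nat" where
  "cyc_len D = (LEAST n. 0 < n \<and> (\<forall>j. Qseq D (j + n) = Qseq D j))"

definition inv2 :: "int^2^2 \<Rightarrow> int^2^2" where
  "inv2 M = (THE N. M ** N = mat 1 \<and> N ** M = mat 1)"

definition Spos :: "int \<Rightarrow> nat \<Rightarrow> int^2^2" where
  "Spos D j = nbr_S D (Qseq D (j - 1))"

(* S^(j), j in Z (j <> 0); for j < 0, S^(j) = (S^(j0))^-1 with j = j0 mod 2p, 0 < j0 <= 2p *)
definition Sseq :: "int \<Rightarrow> int \<Rightarrow> int^2^2" where
  "Sseq D j = (if 0 < j then Spos D (nat j)
     else if j < 0 then inv2 (Spos D (nat ((j - 1) mod int (cyc_len D) + 1)))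
     else mat 1)"

fun mprodn :: "(int \<Rightarrow> int^2^2) \<Rightarrow> int \<Rightarrow> nat \<Rightarrow> int^2^2" where
  "mprodn f a 0 = mat 1"
| "mprodn f a (Suc n) = mprodn f a n ** f (a + int n)"

definition Lmat :: "int \<Rightarrow> int \<Rightarrow> int^2^2" where
  "Lmat D j = (if 0 \<le> j then mprodn (Sseq D) 1 (nat j)
               else mprodn (Sseq D) j (nat (- j)))"

definition absM :: "int^2^2 \<Rightarrow> int^2^2" where
  "absM M = (\<chi> i k. \<bar>M $ i $ k\<bar>)"

definition max_entry :: "int^2^2 \<Rightarrow> int" where
  "max_entry M = Max {\<bar>M $ i $ k\<bar> | i k. True}"

definition min_entry :: "int^2^2 \<Rightarrow> int" where
  "min_entry M = Min {\<bar>M $ i $ k\<bar> | i k. True}"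

end

theory Submission
  imports Defs
begin

text \<open>
  The first coefficients of the reduced forms Q^(j) alternate in sign, so the matrix
  S^(j) = [[0,1],[-1,mu_j]] has mu_j of sign (-1)^(j+1); since the period 2p is even, S^(-j) is
  the inverse [[mu,-1],[1,0]] of a matrix S of the same parity. Multiplying by such a matrix
  turns the column (resp. checkerboard row) sign pattern by a quarter and adds only terms of
  equal sign, which gives (i) and (ii). By (ii), |L_j| is a product of matrices [[0,1],[1,m]]
  (resp. [[m,1],[1,0]]) with 1 <= m <= 2 floor(sqrt D). The entries of such a product increase
  from one corner to the opposite one, with two steps of ratio at most 2 floor(sqrt D) + 1, and
  (2 floor(sqrt D) + 1)^2 < 4 (D + sqrt D).
\<close>

lemma mat2_nth [simp]:
  "mat2 a b c d $ 1 $ 1 = a" "mat2 a b c d $ 1 $ 2 = b"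
  "mat2 a b c d $ 2 $ 1 = c" "mat2 a b c d $ 2 $ 2 = d"
  by (simp_all add: mat2_def)

lemma mat2_cases:
  obtains a b c d where "M = mat2 a b c d"
proof
  show "M = mat2 (M$1$1) (M$1$2) (M$2$1) (M$2$2)"
    unfolding mat2_def vec_eq_iff forall_2 by simp
qed

lemma mat2_eq_iff [simp]:
  "mat2 a b c d = mat2 a' b' c' d' \<longleftrightarrow> a = a' \<and> b = b' \<and> c = c' \<and> d = d'"
  unfolding mat2_def vec_eq_iff forall_2 by simp

lemma mat2_mult [simp]:
  "mat2 a b c d ** mat2 e f g h = mat2 (a*e + b*g) (a*f + b*h) (c*e + d*g) (c*f + d*h)"
  unfolding matrix_matrix_mult_def mat2_def vec_eq_iff forall_2 by (simp add: sum_2)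

lemma mat2_transpose [simp]: "transpose (mat2 a b c d) = mat2 a c b d"
  unfolding transpose_def mat2_def vec_eq_iff forall_2 by simp

lemma mat2_one: "mat 1 = mat2 1 0 0 (1::int)"
  unfolding mat_def mat2_def vec_eq_iff forall_2 by simp

lemma absM_mat2 [simp]: "absM (mat2 a b c d) = mat2 \<bar>a\<bar> \<bar>b\<bar> \<bar>c\<bar> \<bar>d\<bar>"
  unfolding absM_def mat2_def vec_eq_iff forall_2 by simp

lemma mprodn_Suc_left: "mprodn f a (Suc n) = f a ** mprodn f (a + 1) n"
proof (induction n arbitrary: a)
  case (Suc n)
  have "mprodn f a (Suc (Suc n)) = f a ** mprodn f (a + 1) n ** f (a + 1 + int n)"
    using Suc by (simp add: algebra_simps)
  then show ?case
    by (simp add: matrix_mul_assoc)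
qed (simp add: matrix_mul_lid matrix_mul_rid)

lemma inv2_mat2: "inv2 (mat2 0 1 (-1) \<mu>) = mat2 \<mu> (-1) 1 0"
  unfolding inv2_def
proof (rule the_equality)
  fix N
  assume "mat2 0 1 (-1) \<mu> ** N = mat 1 \<and> N ** mat2 0 1 (-1) \<mu> = mat 1"
  then have "N ** mat2 0 1 (-1) \<mu> = mat 1"
    by blast
  have "N = N ** (mat2 0 1 (-1) \<mu> ** mat2 \<mu> (-1) 1 0)"
    by (simp add: mat2_one [symmetric])
  also have "\<dots> = (N ** mat2 0 1 (-1) \<mu>) ** mat2 \<mu> (-1) 1 0"
    by (rule matrix_mul_assoc)
  also have "\<dots> = mat2 \<mu> (-1) 1 0"
    using \<open>N ** mat2 0 1 (-1) \<mu> = mat 1\<close> by simp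
  finally show "N = mat2 \<mu> (-1) 1 0" .
qed (simp add: mat2_one)

lemma set_entries_2x2: "{f i k | i k. True} = {f (1::2) (1::2), f 1 2, f 2 1, f 2 2}"
  by auto (metis exhaust_2)

lemma max_min_entry_absM:
  assumes "absM L = mat2 a b c d"
  shows "max_entry L = Max {a, b, c, d}" "min_entry L = Min {a, b, c, d}"
proof -
  have "\<bar>L $ i $ k\<bar> = mat2 a b c d $ i $ k" for i k
    using arg_cong[OF assms, of "\<lambda>M. M $ i $ k"] by (simp add: absM_def)
  then have "{\<bar>L $ i $ k\<bar> | i k. True} = {a, b, c, d}"
    using set_entries_2x2[of "\<lambda>i k. \<bar>L $ i $ k\<bar>"] by simp
  then show "max_entry L = Max {a, b, c, d}" "min_entry L = Min {a, b, c, d}"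
    by (simp_all only: max_entry_def min_entry_def)
qed

lemma ex1_int_multiple_between:
  fixes x :: real and c :: int
  assumes "c \<noteq> 0" and "\<And>k::int. x \<noteq> k * c"
  shows "\<exists>!\<mu>::int. x < \<mu> * c \<and> \<mu> * c < x + \<bar>c\<bar>"
proof (rule ex_ex1I)
  define t where "t = x / c"
  have x: "x = t * c"
    using assms(1) by (simp add: t_def)
  have "t \<noteq> \<lfloor>t\<rfloor>"
    using assms(2)[of "\<lfloor>t\<rfloor>"] x by auto
  then have fl: "\<lfloor>t\<rfloor> < t" "t < \<lfloor>t\<rfloor> + 1"
    by linarith+
  show "\<exists>\<mu>::int. x < \<mu> * c \<and> \<mu> * c < x + \<bar>c\<bar>"
  proof (cases "c > 0")
    case True
    then have "t * c < (\<lfloor>t\<rfloor> + 1) * c" "\<lfloor>t\<rfloor> * c < t * c"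
      using fl by (simp_all add: mult_strict_right_mono)
    then have "x < (\<lfloor>t\<rfloor> + 1) * c \<and> (\<lfloor>t\<rfloor> + 1) * c < x + \<bar>c\<bar>"
      using True unfolding x by (simp add: algebra_simps)
    then show ?thesis by blast
  next
    case False
    then have "(\<lfloor>t\<rfloor> + 1) * c < t * c" "t * c < \<lfloor>t\<rfloor> * c"
      using fl assms(1) by (simp_all add: mult_strict_right_mono_neg)
    then have "x < \<lfloor>t\<rfloor> * c \<and> \<lfloor>t\<rfloor> * c < x + \<bar>c\<bar>"
      using False unfolding x by (simp add: algebra_simps)
    then show ?thesis by blast
  qed
next
  fix \<mu>1 \<mu>2 :: int
  assume "x < \<mu>1 * c \<and> \<mu>1 * c < x + \<bar>c\<bar>" "x < \<mu>2 * c \<and> \<mu>2 * c < x + \<bar>c\<bar>"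
  then have "\<bar>real_of_int ((\<mu>1 - \<mu>2) * c)\<bar> < \<bar>c\<bar>"
    unfolding of_int_mult of_int_diff left_diff_distrib abs_less_iff by linarith
  then have "\<bar>\<mu>1 - \<mu>2\<bar> * \<bar>c\<bar> < 1 * \<bar>c\<bar>"
    by (simp only: abs_mult of_int_abs of_int_less_iff)
  then show "\<mu>1 = \<mu>2"
    using mult_right_less_imp_less by fastforce
qed

lemma power2_less_of_less_sqrt: "0 \<le> x \<Longrightarrow> x < sqrt y \<Longrightarrow> x\<^sup>2 < y"
  using real_sqrt_le_mono[of y "x\<^sup>2"] by fastforce

lemma between_of_mult_eq:
  fixes u v x y :: "'a::linordered_field"
  assumes "0 < u" "u < x" "x < v" "x * y = u * v"
  shows "u < y" "y < v"
proof -
  have y: "y = u * v / x"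
    using assms by (simp add: eq_divide_eq mult.commute)
  show "u < y"
    unfolding y using assms by (simp add: less_divide_eq mult_strict_left_mono)
  show "y < v"
    unfolding y using assms by (simp add: divide_less_eq mult_strict_right_mono)
qed

lemma sign_flip:
  fixes s x y :: int
  assumes "0 < s * x" and "x * y < 0"
  shows "0 < - s * y"
  using assms by (auto simp: zero_less_mult_iff mult_less_0_iff)

lemma one_le_abs_of_mult_pos:
  fixes x :: int
  assumes "0 < s * x"
  shows "1 \<le> \<bar>x\<bar>"
proof -
  have "x \<noteq> 0"
    using assms by auto
  then show ?thesis
    by linarith
qed

lemma abs_add_same_sign:
  fixes x y :: int
  assumes "\<bar>e\<bar> = 1" "0 \<le> e * x" "0 \<le> e * y"
  shows "\<bar>x + y\<bar> = \<bar>x\<bar> + \<bar>y\<bar>"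
  using assms by (auto simp: abs_if split: if_splits)

section \<open>Reduced forms and their right neighbours\<close>

definition reduced :: "int \<Rightarrow> int^2^2 \<Rightarrow> bool" where
  "reduced D Q \<longleftrightarrow> Q$2$1 = Q$1$2 \<and> form_det Q = D \<and> 0 < Q$1$2 \<and> Q$1$2 < sqrt D \<and>
     sqrt D - Q$1$2 < \<bar>Q$1$1\<bar> \<and> \<bar>Q$1$1\<bar> < sqrt D + Q$1$2"

lemma reduced_mat2_iff:
  "reduced D (mat2 a b b c) \<longleftrightarrow> b\<^sup>2 - a * c = D \<and> 0 < b \<and> b < sqrt D \<and>
     sqrt D - b < \<bar>a\<bar> \<and> \<bar>a\<bar> < sqrt D + b"
  by (simp add: reduced_def form_det_def)

lemma reduced_cases:
  assumes "reduced D Q"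
  obtains a b c where "Q = mat2 a b b c"
  using assms by (cases Q rule: mat2_cases) (auto simp: reduced_def)

lemma reduced_outer_coeffs:
  assumes "reduced D (mat2 a b b c)"
  shows "a * c < 0" "sqrt D - b < \<bar>c\<bar>" "\<bar>c\<bar> < sqrt D + b"
proof -
  let ?s = "sqrt (real_of_int D)"
  have D: "b\<^sup>2 - a * c = D" and b: "0 < b" "b < ?s"
    and a: "?s - b < \<bar>real_of_int a\<bar>" "\<bar>real_of_int a\<bar> < ?s + b"
    using assms by (auto simp: reduced_mat2_iff)
  have bD: "b\<^sup>2 < D"
    using power2_less_of_less_sqrt[of "real_of_int b" "real_of_int D"] b by simp
  then show ac: "a * c < 0"
    using D by linarith
  have D0: "0 < D"
    using bD zero_le_power2[of b] by linarith
  have "\<bar>a\<bar> * \<bar>c\<bar> = D - b\<^sup>2"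
    using ac D by (simp add: abs_mult [symmetric])
  moreover have "(?s - b) * (?s + b) = D - b\<^sup>2"
    using D0 by (simp add: algebra_simps power2_eq_square)
  ultimately have "\<bar>real_of_int a\<bar> * \<bar>real_of_int c\<bar> = (?s - b) * (?s + b)"
    by (metis of_int_abs of_int_mult of_int_diff)
  moreover have "0 < ?s - b"
    using b by simp
  ultimately show "?s - b < \<bar>real_of_int c\<bar>" "\<bar>real_of_int c\<bar> < ?s + b"
    using between_of_mult_eq a by blast+
qed

lemma reduced_right_step:
  fixes \<mu> :: int
  assumes red: "reduced D (mat2 a b b c)"
    and lo: "- sqrt D - b < real_of_int (\<mu> * c)"
    and hi: "real_of_int (\<mu> * c) < - sqrt D - b + \<bar>c\<bar>"
  shows "reduced D (mat2 c (- b - \<mu> * c) (- b - \<mu> * c) (a + 2 * b * \<mu> + \<mu>\<^sup>2 * c))"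
    and "\<mu> * c < 0"
    and "\<bar>\<mu>\<bar> \<le> 2 * \<lfloor>sqrt D\<rfloor>"
proof -
  let ?s = "sqrt (real_of_int D)"
  have D: "b\<^sup>2 - a * c = D" and b: "0 < b" "b < ?s"
    using red by (auto simp: reduced_mat2_iff)
  have c: "?s - b < \<bar>real_of_int c\<bar>" "\<bar>real_of_int c\<bar> < ?s + b"
    using reduced_outer_coeffs[OF red] by auto
  show \<mu>c: "\<mu> * c < 0"
    using hi c(2) by linarith
  then have "1 \<le> \<bar>\<mu>\<bar>" "1 \<le> \<bar>c\<bar>"
    by (auto simp: abs_if mult_less_0_iff)
  then have "\<bar>c\<bar> \<le> \<bar>\<mu>\<bar> * \<bar>c\<bar>" "\<bar>\<mu>\<bar> \<le> \<bar>\<mu>\<bar> * \<bar>c\<bar>"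
    by (simp_all add: mult_le_cancel_right1 mult_le_cancel_left1)
  then have "\<bar>c\<bar> \<le> - (\<mu> * c)" "\<bar>\<mu>\<bar> \<le> - (\<mu> * c)"
    using \<mu>c by (simp_all add: abs_mult [symmetric])
  then have mu_c: "\<bar>real_of_int c\<bar> \<le> - real_of_int (\<mu> * c)" "\<bar>real_of_int \<mu>\<bar> \<le> - real_of_int (\<mu> * c)"
    by (metis of_int_abs of_int_le_iff of_int_minus)+
  have "b \<le> \<lfloor>?s\<rfloor>"
    using b(2) by (simp add: le_floor_iff)
  then have "real_of_int \<bar>\<mu>\<bar> < real_of_int (2 * \<lfloor>?s\<rfloor> + 1)"
    using mu_c(2) lo of_int_floor_le[of ?s] by simp linarith
  then show "\<bar>\<mu>\<bar> \<le> 2 * \<lfloor>?s\<rfloor>"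
    by linarith
  define b' where "b' = - b - \<mu> * c"
  have b': "real_of_int b' = - b - real_of_int (\<mu> * c)"
    by (simp add: b'_def)
  have "b'\<^sup>2 - c * (a + 2 * b * \<mu> + \<mu>\<^sup>2 * c) = D"
    using D by (simp add: b'_def algebra_simps power2_eq_square)
  moreover have "?s - \<bar>real_of_int c\<bar> < b'" "b' < ?s" "\<bar>real_of_int c\<bar> - ?s < b'"
    using lo hi mu_c(1) b(2) unfolding b' by linarith+
  ultimately show "reduced D (mat2 c (- b - \<mu> * c) (- b - \<mu> * c) (a + 2 * b * \<mu> + \<mu>\<^sup>2 * c))"
    unfolding reduced_mat2_iff b'_def [symmetric] by auto
qed

lemma right_nbr_mat2:
  assumes "\<mu> = nbr_mu D (mat2 a b b c)"
  shows "right_nbr D (mat2 a b b c) = mat2 c (- b - \<mu> * c) (- b - \<mu> * c) (a + 2 * b * \<mu> + \<mu>\<^sup>2 * c)"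
  using assms by (simp add: right_nbr_def nbr_S_def algebra_simps power2_eq_square)

lemma right_nbr_nth_11: "right_nbr D Q $ 1 $ 1 = Q $ 2 $ 2"
  by (cases Q rule: mat2_cases) (simp add: right_nbr_def nbr_S_def)

lemma reduced_corner_mult_neg:
  assumes "reduced D Q"
  shows "Q $ 1 $ 1 * Q $ 2 $ 2 < 0"
  using assms reduced_outer_coeffs(1) by (metis reduced_cases mat2_nth)

lemma reduced_coeffs_abs_less:
  assumes "reduced D (mat2 a b b c)"
  shows "\<bar>a\<bar> < D" "\<bar>b\<bar> < D" "\<bar>c\<bar> < D"
proof -
  have D: "b\<^sup>2 - a * c = D" and b: "0 < b"
    using assms by (auto simp: reduced_mat2_iff)
  have ac: "a * c < 0"
    using reduced_outer_coeffs(1)[OF assms] .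
  then have "1 \<le> \<bar>a\<bar>" "1 \<le> \<bar>c\<bar>"
    by (auto simp: abs_if mult_less_0_iff)
  then have "\<bar>a\<bar> \<le> \<bar>a\<bar> * \<bar>c\<bar>" "\<bar>c\<bar> \<le> \<bar>a\<bar> * \<bar>c\<bar>" "b \<le> b\<^sup>2"
    using b by (simp_all add: mult_le_cancel_left1 mult_le_cancel_right1 power2_eq_square)
  moreover have "\<bar>a\<bar> * \<bar>c\<bar> = D - b\<^sup>2"
    using ac D by (simp add: abs_mult [symmetric])
  moreover have "0 < \<bar>a\<bar> * \<bar>c\<bar>"
    using ac by (simp add: abs_mult [symmetric])
  ultimately show "\<bar>a\<bar> < D" "\<bar>b\<bar> < D" "\<bar>c\<bar> < D"
    using b by auto
qed

lemma finite_reduced: "finite {Q. reduced D Q}"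
proof (rule finite_subset)
  let ?I = "{-D..D}"
  show "{Q. reduced D Q} \<subseteq> (\<lambda>(a, b, c). mat2 a b b c) ` (?I \<times> ?I \<times> ?I)"
  proof
    fix Q assume "Q \<in> {Q. reduced D Q}"
    then obtain a b c where Q: "Q = mat2 a b b c" and red: "reduced D (mat2 a b b c)"
      by (metis mem_Collect_eq reduced_cases)
    then have "(a, b, c) \<in> ?I \<times> ?I \<times> ?I"
      using reduced_coeffs_abs_less[OF red] by auto
    then show "Q \<in> (\<lambda>(a, b, c). mat2 a b b c) ` (?I \<times> ?I \<times> ?I)"
      unfolding Q by force
  qed
qed simp

lemma right_nbr_inj_on: "inj_on (right_nbr D) {Q. reduced D Q}"
proof (rule inj_onI)
  fix P Q
  assume "P \<in> {Q. reduced D Q}" "Q \<in> {Q. reduced D Q}" and eq: "right_nbr D P = right_nbr D Q"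
  then have red: "reduced D P" "reduced D Q"
    by simp_all
  obtain a b c where P: "P = mat2 a b b c"
    using red(1) by (rule reduced_cases)
  obtain a' b' c' where Q: "Q = mat2 a' b' b' c'"
    using red(2) by (rule reduced_cases)
  have "c = c' \<and> - b - nbr_mu D P * c = - b' - nbr_mu D Q * c'"
    using eq unfolding P Q right_nbr_mat2[OF refl] mat2_eq_iff by blast
  then have c: "c' = c" and "b - b' = (nbr_mu D Q - nbr_mu D P) * c"
    by (auto simp: algebra_simps)
  then have "c dvd b - b'"
    by simp
  moreover have "\<bar>b - b'\<bar> < \<bar>c\<bar>"
    using reduced_outer_coeffs(2)[OF red(1)[unfolded P]] reduced_outer_coeffs(2)[OF red(2)[unfolded Q]]
      red c by (simp add: P Q reduced_mat2_iff abs_less_iff) linarith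
  ultimately have b: "b' = b"
    using dvd_imp_le_int[of "b - b'" c] by fastforce
  have "a * c = a' * c" "c \<noteq> 0"
    using red reduced_corner_mult_neg[OF red(1)] by (auto simp: P Q b c reduced_mat2_iff)
  then show "P = Q"
    by (simp add: P Q b c)
qed

lemma Qseq_0: "Qseq D 0 = ident_form D"
  by (simp add: Qseq_def)

lemma Qseq_Suc: "Qseq D (Suc j) = right_nbr D (Qseq D j)"
  by (simp add: Qseq_def)

section \<open>Sign patterns of products\<close>

definition sign_pattern :: "int^2^2 \<Rightarrow> int^2^2 \<Rightarrow> bool" where
  "sign_pattern E M \<longleftrightarrow> (\<forall>i k. 0 \<le> E $ i $ k * M $ i $ k)"

lemma sign_pattern_mat2:
  "sign_pattern (mat2 e f g h) (mat2 a b c d) \<longleftrightarrow> 0 \<le> e * a \<and> 0 \<le> f * b \<and> 0 \<le> g * c \<and> 0 \<le> h * d"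
  by (simp add: sign_pattern_def forall_2)

text \<open>
  Right multiplication by [[0,1],[-1,mu]] maps the columns (x, y) to (-y, x + mu y). When mu has
  the sign of e1 e2, the summands x and mu y have equal signs, so nothing cancels.
\<close>

lemma sign_pattern_mult_right:
  fixes L :: "int^2^2"
  assumes e: "\<bar>e1\<bar> = 1" "\<bar>e2\<bar> = 1" and L: "sign_pattern (mat2 e1 e2 e1 e2) L" and \<mu>: "0 < e1 * e2 * \<mu>"
  shows "sign_pattern (mat2 (- e2) e1 (- e2) e1) (L ** mat2 0 1 (-1) \<mu>)"
    and "absM (L ** mat2 0 1 (-1) \<mu>) = absM L ** absM (mat2 0 1 (-1) \<mu>)"
proof -
  obtain a b c d where L_eq: "L = mat2 a b c d"
    by (rule mat2_cases)
  have signs: "0 \<le> e1 * a" "0 \<le> e2 * b" "0 \<le> e1 * c" "0 \<le> e2 * d"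
    using L by (simp_all add: L_eq sign_pattern_mat2)
  have "0 \<le> e1 * (x * \<mu>)" if "0 \<le> e2 * x" for x
  proof -
    have "e2 * e2 = 1"
      using e(2) abs_mult_self_eq[of e2] by simp
    then have "e1 * (x * \<mu>) = (e2 * x) * (e1 * e2 * \<mu>)"
      by (simp add: algebra_simps)
    then show ?thesis
      using that \<mu> by (simp only: mult_nonneg_nonneg less_imp_le)
  qed
  with signs have "0 \<le> e1 * (b * \<mu>)" "0 \<le> e1 * (d * \<mu>)"
    by blast+
  with signs show "sign_pattern (mat2 (- e2) e1 (- e2) e1) (L ** mat2 0 1 (-1) \<mu>)"
    and "absM (L ** mat2 0 1 (-1) \<mu>) = absM L ** absM (mat2 0 1 (-1) \<mu>)"
    by (simp_all add: L_eq sign_pattern_mat2 distrib_left abs_add_same_sign[OF e(1)] abs_mult)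
qed

lemma sign_pattern_mult_left:
  fixes L :: "int^2^2"
  assumes e: "\<bar>e1\<bar> = 1" "\<bar>e2\<bar> = 1" and L: "sign_pattern (mat2 e1 (- e1) e2 (- e2)) L"
    and \<nu>: "e1 * e2 * \<nu> < 0"
  shows "sign_pattern (mat2 (- e2) e2 e1 (- e1)) (mat2 \<nu> (-1) 1 0 ** L)"
    and "absM (mat2 \<nu> (-1) 1 0 ** L) = absM (mat2 \<nu> (-1) 1 0) ** absM L"
proof -
  obtain a b c d where L_eq: "L = mat2 a b c d"
    by (rule mat2_cases)
  have signs: "0 \<le> e1 * a" "0 \<le> - e1 * b" "0 \<le> e2 * c" "0 \<le> - e2 * d"
    using L by (simp_all add: L_eq sign_pattern_mat2)
  have "0 \<le> e2 * (\<nu> * x)" if "0 \<le> - e1 * x" for x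
  proof -
    have "e1 * e1 = 1"
      using e(1) abs_mult_self_eq[of e1] by simp
    then have "e2 * (\<nu> * x) = (- e1 * x) * - (e1 * e2 * \<nu>)"
      by (simp add: algebra_simps)
    moreover have "0 \<le> - (e1 * e2 * \<nu>)"
      using \<nu> by simp
    ultimately show ?thesis
      using that by (simp only: mult_nonneg_nonneg)
  qed
  from this[of b] this[of "- a"] signs have "0 \<le> - e2 * (\<nu> * a)" "0 \<le> e2 * (\<nu> * b)"
    by simp_all
  with signs show "sign_pattern (mat2 (- e2) e2 e1 (- e1)) (mat2 \<nu> (-1) 1 0 ** L)"
    and "absM (mat2 \<nu> (-1) 1 0 ** L) = absM (mat2 \<nu> (-1) 1 0) ** absM L"
    using abs_add_same_sign[of "- e2" "\<nu> * a" "- c"] abs_add_same_sign[of e2 "\<nu> * b" "- d"] e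
    by (simp_all add: L_eq sign_pattern_mat2 right_diff_distrib abs_mult)
qed

text \<open>
  The pair (quarter_sign (n + 1), quarter_sign n) runs through the column signs (+,+), (-,+),
  (-,-), (+,-) of L_n as n runs through the residues 0, 1, 2, 3 modulo 4.
\<close>

definition quarter_sign :: "nat \<Rightarrow> int" where
  "quarter_sign n = (if n mod 4 < 2 then 1 else -1)"

lemma abs_quarter_sign [simp]: "\<bar>quarter_sign n\<bar> = 1"
  by (simp add: quarter_sign_def)

lemma quarter_sign_Suc_Suc [simp]: "quarter_sign (Suc (Suc n)) = - quarter_sign n"
  unfolding quarter_sign_def by presburger

lemma quarter_sign_mult_Suc: "quarter_sign (Suc n) * quarter_sign n = (-1) ^ n"
proof (induction n)
  case (Suc n)
  then show ?case
    by (simp add: mult.commute)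
qed (simp add: quarter_sign_def)

section \<open>Products with entries graded from corner to corner\<close>

definition graded_entries :: "int \<Rightarrow> int \<Rightarrow> int \<Rightarrow> int \<Rightarrow> int \<Rightarrow> bool" where
  "graded_entries M a b c d \<longleftrightarrow> 1 \<le> a \<and> a \<le> b \<and> a \<le> c \<and> b \<le> d \<and> c \<le> d \<and>
     b \<le> (M + 1) * a \<and> c \<le> (M + 1) * a \<and> d \<le> (M + 1) * b"

lemma graded_entries_start:
  assumes "1 \<le> m1" "m1 \<le> M" "1 \<le> m2" "m2 \<le> M"
  shows "graded_entries M 1 m2 m1 (1 + m1 * m2)"
proof -
  have "m2 \<le> m1 * m2" "m1 \<le> m1 * m2" "m1 * m2 \<le> M * m2"
    using assms by (simp_all add: mult_right_mono)
  then show ?thesis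
    unfolding graded_entries_def distrib_right mult_1_left mult_1_right using assms by linarith
qed

lemma graded_entries_step:
  assumes "graded_entries M a b c d" "1 \<le> m" "m \<le> M"
  shows "graded_entries M b (a + b * m) d (c + d * m)"
proof -
  have g: "1 \<le> a" "a \<le> b" "a \<le> c" "b \<le> d" "c \<le> d" "c \<le> M * a + a" "d \<le> M * b + b"
    using assms(1) by (auto simp: graded_entries_def algebra_simps)
  have "b \<le> b * m" "d \<le> d * m" "b * m \<le> d * m" "b * m \<le> M * b"
    using g assms(2,3) by (simp_all add: mult_left_mono mult_right_mono mult.commute)
  moreover have "d * m \<le> M * (b * m) + b * m"
    using mult_right_mono[OF g(7), of m] assms(2) by (simp add: algebra_simps)
  ultimately show ?thesis
    unfolding graded_entries_def distrib_left distrib_right mult_1_left using g by linarith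
qed

lemma graded_entries_Max_Min:
  assumes "graded_entries M a b c d"
  shows "Max {a, b, c, d} = d" "Min {a, b, c, d} = a"
  using assms by (auto simp: graded_entries_def max_def min_def)

lemma graded_entries_corner_bound:
  assumes "graded_entries M a b c d"
  shows "d \<le> (M + 1)\<^sup>2 * a"
proof -
  have "1 \<le> a" "a \<le> b" "b \<le> (M + 1) * a" "d \<le> (M + 1) * b"
    using assms by (auto simp: graded_entries_def)
  then have "0 < (M + 1) * a" "0 < a"
    by linarith+
  then have "0 < M + 1"
    by (rule zero_less_mult_pos2)
  then have "(M + 1) * b \<le> (M + 1) * ((M + 1) * a)"
    using \<open>b \<le> (M + 1) * a\<close> by simp
  then show ?thesis
    using \<open>d \<le> (M + 1) * b\<close> by (simp add: power2_eq_square algebra_simps)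
qed

section \<open>The principal cycle of a non-square determinant\<close>

locale nonsquare =
  fixes D :: int
  assumes pos: "0 < D" and not_square: "\<nexists>k. D = k\<^sup>2"
begin

lemma sqrt_not_int: "sqrt D \<noteq> of_int k"
proof
  assume "sqrt D = of_int k"
  then have "real_of_int D = of_int (k\<^sup>2)"
    using pos by (metis of_int_0_le_iff of_int_power less_imp_le real_sqrt_pow2)
  then have "D = k\<^sup>2"
    by (simp only: of_int_eq_iff)
  then show False
    using not_square by blast
qed

lemma floor_sqrt_less: "\<lfloor>sqrt D\<rfloor> < sqrt D"
  using of_int_floor_le[of "sqrt D"] sqrt_not_int[of "\<lfloor>sqrt D\<rfloor>"] by linarith

lemma nbr_mu_bounds:
  assumes "reduced D (mat2 a b b c)"
  shows "- sqrt D - b < real_of_int (nbr_mu D (mat2 a b b c) * c)"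
    and "real_of_int (nbr_mu D (mat2 a b b c) * c) < - sqrt D - b + \<bar>c\<bar>"
proof -
  have "c \<noteq> 0"
    using reduced_outer_coeffs(1)[OF assms] by auto
  moreover have "- sqrt D - b \<noteq> real_of_int (k * c)" for k
    using sqrt_not_int[of "- b - k * c"] by auto
  ultimately have "\<exists>!\<mu>. - sqrt D - b < real_of_int (\<mu> * c) \<and> real_of_int (\<mu> * c) < - sqrt D - b + \<bar>c\<bar>"
    by (rule ex1_int_multiple_between)
  then have "- sqrt D - b < real_of_int (nbr_mu D (mat2 a b b c) * c) \<and>
    real_of_int (nbr_mu D (mat2 a b b c) * c) < - sqrt D - b + \<bar>c\<bar>"
    unfolding nbr_mu_def mat2_nth by (rule theI')
  then show "- sqrt D - b < real_of_int (nbr_mu D (mat2 a b b c) * c)"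
    and "real_of_int (nbr_mu D (mat2 a b b c) * c) < - sqrt D - b + \<bar>c\<bar>"
    by auto
qed

lemma reduced_right_nbr:
  assumes "reduced D Q"
  shows "reduced D (right_nbr D Q)"
    and "nbr_mu D Q * Q $ 2 $ 2 < 0"
    and "\<bar>nbr_mu D Q\<bar> \<le> 2 * \<lfloor>sqrt D\<rfloor>"
proof -
  obtain a b c where Q: "Q = mat2 a b b c"
    using assms by (rule reduced_cases)
  note step = reduced_right_step[OF assms[unfolded Q] nbr_mu_bounds[OF assms[unfolded Q]]]
  show "reduced D (right_nbr D Q)" "nbr_mu D Q * Q $ 2 $ 2 < 0" "\<bar>nbr_mu D Q\<bar> \<le> 2 * \<lfloor>sqrt D\<rfloor>"
    using step by (simp_all add: Q right_nbr_mat2)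
qed

lemma reduced_ident_form: "reduced D (ident_form D)"
proof -
  let ?l = "\<lfloor>sqrt D\<rfloor>"
  have "1 \<le> sqrt D"
    using pos by simp
  then have "1 \<le> ?l"
    by (simp add: le_floor_iff)
  moreover have "sqrt D - ?l < 1" "1 < sqrt D + ?l"
    using floor_sqrt_less calculation by linarith+
  ultimately show ?thesis
    using floor_sqrt_less by (simp add: ident_form_def Let_def reduced_mat2_iff)
qed

lemma reduced_Qseq: "reduced D (Qseq D j)"
  by (induction j) (simp_all add: Qseq_0 Qseq_Suc reduced_ident_form reduced_right_nbr)

lemma Qseq_sign: "0 < (-1) ^ j * Qseq D j $ 1 $ 1"
proof (induction j)
  case 0
  then show ?case
    by (simp add: Qseq_0 ident_form_def Let_def)
next
  case (Suc j)
  then show ?case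
    using sign_flip[OF Suc reduced_corner_mult_neg[OF reduced_Qseq]] by (simp add: Qseq_Suc right_nbr_nth_11)
qed

lemma nbr_mu_Qseq_sign: "0 < (-1) ^ j * nbr_mu D (Qseq D j)"
  using sign_flip[OF Qseq_sign[of "Suc j"]] reduced_right_nbr(2)[OF reduced_Qseq, of j]
  by (simp add: Qseq_Suc right_nbr_nth_11) (metis mult.commute)

lemma Qseq_periodic: "\<exists>n > 0. \<forall>j. Qseq D (j + n) = Qseq D j"
proof -
  have "range (Qseq D) \<subseteq> {Q. reduced D Q}"
    using reduced_Qseq by auto
  then have "\<not> inj (Qseq D)"
    using finite_reduced finite_subset finite_imageD infinite_UNIV_nat by blast
  then obtain i n where "0 < n" and "Qseq D (i + n) = Qseq D i"
    unfolding inj_def by (metis less_imp_add_positive linorder_neqE_nat)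
  then have "Qseq D n = Qseq D 0"
  proof (induction i)
    case (Suc i)
    then show ?case
      using inj_onD[OF right_nbr_inj_on] reduced_Qseq by (simp add: Qseq_Suc)
  qed simp
  then have "Qseq D (j + n) = Qseq D j" for j
    by (induction j) (simp_all add: Qseq_Suc)
  with \<open>0 < n\<close> show ?thesis
    by blast
qed

lemma cyc_len_pos_even: "0 < cyc_len D \<and> even (cyc_len D)"
proof -
  have "0 < cyc_len D \<and> (\<forall>j. Qseq D (j + cyc_len D) = Qseq D j)"
    unfolding cyc_len_def by (rule LeastI_ex[OF Qseq_periodic])
  then have "0 < cyc_len D" and "0 < (-1) ^ cyc_len D * Qseq D 0 $ 1 $ 1"
    using Qseq_sign[of "cyc_len D"] by (metis add_0)+
  then show ?thesis
    using Qseq_sign[of 0] by (auto simp: zero_less_mult_iff zero_less_power_eq)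
qed

lemma Sseq_pos: "Sseq D (int j + 1) = mat2 0 1 (-1) (nbr_mu D (Qseq D j))"
  by (simp add: Sseq_def Spos_def nbr_S_def nat_add_distrib)

lemma Sseq_neg:
  "\<exists>\<nu>. Sseq D (- int j - 1) = mat2 \<nu> (-1) 1 0 \<and> 0 < (-1) ^ j * \<nu> \<and> \<bar>\<nu>\<bar> \<le> 2 * \<lfloor>sqrt D\<rfloor>"
proof -
  define p where "p = int (cyc_len D)"
  \<comment> \<open>S^(-j-1) is the inverse of S^(m+1); m has the parity of j because the period p is even.\<close>
  define m where "m = nat ((- int j - 2) mod p)"
  have p: "0 < p" "2 dvd p"
    using cyc_len_pos_even by (auto simp: p_def)
  then have "Sseq D (- int j - 1) = mat2 (nbr_mu D (Qseq D m)) (-1) 1 0"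
    by (simp add: Sseq_def Spos_def nbr_S_def inv2_mat2 m_def p_def [symmetric] algebra_simps nat_add_distrib)
  moreover have "even m = even j"
    using p by (simp add: m_def even_nat_iff dvd_mod_iff)
  then have "(-1) ^ m = ((-1) ^ j :: int)"
    by (simp add: minus_one_power_iff)
  ultimately show ?thesis
    using nbr_mu_Qseq_sign[of m] reduced_right_nbr(3)[OF reduced_Qseq] by metis
qed

lemma nbr_mu_Qseq_abs_bounds: "1 \<le> \<bar>nbr_mu D (Qseq D n)\<bar> \<and> \<bar>nbr_mu D (Qseq D n)\<bar> \<le> 2 * \<lfloor>sqrt D\<rfloor>"
  using one_le_abs_of_mult_pos[OF nbr_mu_Qseq_sign] reduced_right_nbr(3)[OF reduced_Qseq] by blast

lemma sign_pattern_mprodn_Sseq_pos: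
  "sign_pattern (mat2 (quarter_sign (Suc n)) (quarter_sign n) (quarter_sign (Suc n)) (quarter_sign n))
     (mprodn (Sseq D) 1 n) \<and>
   absM (mprodn (Sseq D) 1 n) = mprodn (\<lambda>i. absM (Sseq D i)) 1 n"
proof (induction n)
  case 0
  then show ?case
    by (simp add: mat2_one sign_pattern_mat2 quarter_sign_def)
next
  case (Suc n)
  have "0 < quarter_sign (Suc n) * quarter_sign n * nbr_mu D (Qseq D n)"
    using nbr_mu_Qseq_sign by (simp add: quarter_sign_mult_Suc)
  note step = sign_pattern_mult_right[OF abs_quarter_sign abs_quarter_sign Suc[THEN conjunct1] this]
  show ?case
    using step Suc[THEN conjunct2] Sseq_pos[of n] by (simp add: add.commute)
qed

lemma sign_pattern_mprodn_Sseq_neg: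
  "sign_pattern (mat2 (quarter_sign n) (- quarter_sign n) (- quarter_sign (Suc n)) (quarter_sign (Suc n)))
     (mprodn (Sseq D) (- int n) n) \<and>
   absM (mprodn (Sseq D) (- int n) n) = mprodn (\<lambda>i. absM (Sseq D i)) (- int n) n"
proof (induction n)
  case 0
  then show ?case
    by (simp add: mat2_one sign_pattern_mat2 quarter_sign_def)
next
  case (Suc n)
  obtain \<nu> where S: "Sseq D (- int n - 1) = mat2 \<nu> (-1) 1 0" and "0 < (-1) ^ n * \<nu>"
    using Sseq_neg by blast
  then have "quarter_sign n * - quarter_sign (Suc n) * \<nu> < 0"
    by (simp add: quarter_sign_mult_Suc [symmetric] algebra_simps)
  note step = sign_pattern_mult_left[of "quarter_sign n" "- quarter_sign (Suc n)", OF _ _ _ this]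
  have "- int (Suc n) = - int n - 1" "- int n - 1 + 1 = - int n"
    by simp_all
  then show ?case
    using step Suc S by (simp only: mprodn_Suc_left) simp
qed

lemma graded_mprodn_absM_Sseq_pos:
  assumes "2 \<le> n"
  shows "\<exists>a b c d. mprodn (\<lambda>i. absM (Sseq D i)) 1 n = mat2 a b c d \<and>
    graded_entries (2 * \<lfloor>sqrt D\<rfloor>) a b c d"
  using assms
proof (induction n rule: nat_induct_at_least)
  case base
  show ?case
    using Sseq_pos[of 0] Sseq_pos[of 1] nbr_mu_Qseq_abs_bounds[of 0] nbr_mu_Qseq_abs_bounds[of 1]
      graded_entries_start[of "\<bar>nbr_mu D (Qseq D 0)\<bar>" _ "\<bar>nbr_mu D (Qseq D 1)\<bar>"]
    by (simp add: numeral_2_eq_2 mat2_one)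
next
  case (Suc n)
  then obtain a b c d where "mprodn (\<lambda>i. absM (Sseq D i)) 1 n = mat2 a b c d"
    and "graded_entries (2 * \<lfloor>sqrt D\<rfloor>) a b c d"
    by blast
  then show ?case
    using Sseq_pos[of n] nbr_mu_Qseq_abs_bounds[of n] graded_entries_step by (simp add: add.commute)
qed

text \<open>
  Left multiplication by [[m,1],[1,0]] is the step of graded_entries_step with the corners of
  the matrix exchanged.
\<close>

lemma graded_mprodn_absM_Sseq_neg:
  assumes "2 \<le> n"
  shows "\<exists>a b c d. mprodn (\<lambda>i. absM (Sseq D i)) (- int n) n = mat2 a b c d \<and>
    graded_entries (2 * \<lfloor>sqrt D\<rfloor>) d b c a"
  using assms
proof (induction n rule: nat_induct_at_least)
  case base
  obtain \<nu>0 \<nu>1 where "Sseq D (- 1) = mat2 \<nu>0 (-1) 1 0" "0 < \<nu>0" "\<bar>\<nu>0\<bar> \<le> 2 * \<lfloor>sqrt D\<rfloor>"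
    and "Sseq D (- 2) = mat2 \<nu>1 (-1) 1 0" "0 < - \<nu>1" "\<bar>\<nu>1\<bar> \<le> 2 * \<lfloor>sqrt D\<rfloor>"
    using Sseq_neg[of 0] Sseq_neg[of 1] by auto
  then show ?case
    using graded_entries_start[of "\<bar>\<nu>0\<bar>" _ "\<bar>\<nu>1\<bar>"] one_le_abs_of_mult_pos[of 1 \<nu>0] one_le_abs_of_mult_pos[of "-1" \<nu>1]
    by (simp add: numeral_2_eq_2 mprodn_Suc_left mat2_one mult.commute add.commute)
next
  case (Suc n)
  then obtain a b c d where "mprodn (\<lambda>i. absM (Sseq D i)) (- int n) n = mat2 a b c d"
    and "graded_entries (2 * \<lfloor>sqrt D\<rfloor>) d b c a"
    by blast
  moreover obtain \<nu> where "Sseq D (- int n - 1) = mat2 \<nu> (-1) 1 0" "1 \<le> \<bar>\<nu>\<bar>" "\<bar>\<nu>\<bar> \<le> 2 * \<lfloor>sqrt D\<rfloor>"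
    using Sseq_neg[of n] one_le_abs_of_mult_pos by blast
  moreover have "- int (Suc n) = - int n - 1" "- int n - 1 + 1 = - int n"
    by simp_all
  ultimately show ?case
    using graded_entries_step[of "2 * \<lfloor>sqrt D\<rfloor>" d b c a "\<bar>\<nu>\<bar>"]
    by (simp only: mprodn_Suc_left) (simp add: add.commute mult.commute)
qed

lemma graded_entries_quotient_bound:
  assumes "graded_entries (2 * \<lfloor>sqrt D\<rfloor>) a b c d"
  shows "1 \<le> real_of_int d / a \<and> real_of_int d / a \<le> 4 * (D + sqrt D)"
proof -
  let ?l = "\<lfloor>sqrt D\<rfloor>"
  have "?l\<^sup>2 < D"
    using power2_less_of_less_sqrt[of "real_of_int ?l" "real_of_int D"] floor_sqrt_less pos by simp
  then have "(2 * ?l + 1)\<^sup>2 \<le> 4 * D + 4 * ?l - 3"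
    by (simp add: power2_eq_square algebra_simps)
  then have "real_of_int ((2 * ?l + 1)\<^sup>2) \<le> real_of_int (4 * D + 4 * ?l - 3)"
    by (simp only: of_int_le_iff)
  also have "\<dots> \<le> 4 * (D + sqrt D)"
    using floor_sqrt_less by simp
  finally have M: "real_of_int ((2 * ?l + 1)\<^sup>2) \<le> 4 * (D + sqrt D)" .
  have a: "1 \<le> a" "a \<le> d"
    using assms by (auto simp: graded_entries_def)
  have "real_of_int d \<le> real_of_int ((2 * ?l + 1)\<^sup>2) * a"
    using graded_entries_corner_bound[OF assms] by (metis of_int_le_iff of_int_mult)
  also have "\<dots> \<le> 4 * (D + sqrt D) * a"
    using M a by (simp add: mult_right_mono)
  finally show ?thesis
    using a by (simp add: divide_le_eq le_divide_eq)
qed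

lemma Lmat_sign_pattern:
  assumes "0 < j"
  shows "let L = Lmat D j in
    (j mod 4 = 0 \<longrightarrow> L$1$1 \<ge> 0 \<and> L$1$2 \<ge> 0 \<and> L$2$1 \<ge> 0 \<and> L$2$2 \<ge> 0) \<and>
    (j mod 4 = 1 \<longrightarrow> L$1$1 \<le> 0 \<and> L$1$2 \<ge> 0 \<and> L$2$1 \<le> 0 \<and> L$2$2 \<ge> 0) \<and>
    (j mod 4 = 2 \<longrightarrow> L$1$1 \<le> 0 \<and> L$1$2 \<le> 0 \<and> L$2$1 \<le> 0 \<and> L$2$2 \<le> 0) \<and>
    (j mod 4 = 3 \<longrightarrow> L$1$1 \<ge> 0 \<and> L$1$2 \<le> 0 \<and> L$2$1 \<ge> 0 \<and> L$2$2 \<le> 0)"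
proof -
  obtain n where j: "j = int n"
    using assms by (metis zero_less_imp_eq_int)
  have "sign_pattern (mat2 (quarter_sign (Suc n)) (quarter_sign n) (quarter_sign (Suc n)) (quarter_sign n))
      (Lmat D j)"
    using sign_pattern_mprodn_Sseq_pos by (simp add: Lmat_def j)
  moreover have "j mod 4 = int (n mod 4)"
    by (simp add: j zmod_int)
  ultimately show ?thesis
    by (auto simp: Let_def sign_pattern_def forall_2 quarter_sign_def mod_Suc)
qed

lemma absM_Lmat:
  assumes "0 < j"
  shows "absM (Lmat D j) = mprodn (\<lambda>i. absM (Sseq D i)) 1 (nat j)"
    and "absM (Lmat D (- j)) = mprodn (\<lambda>i. absM (Sseq D i)) (- j) (nat j)"
proof -
  obtain n where j: "j = int n"
    using assms by (metis zero_less_imp_eq_int)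
  show "absM (Lmat D j) = mprodn (\<lambda>i. absM (Sseq D i)) 1 (nat j)"
    using sign_pattern_mprodn_Sseq_pos by (simp add: Lmat_def j)
  show "absM (Lmat D (- j)) = mprodn (\<lambda>i. absM (Sseq D i)) (- j) (nat j)"
    using sign_pattern_mprodn_Sseq_neg assms by (simp add: Lmat_def j)
qed

lemma Lmat_entry_ratio:
  assumes "2 \<le> \<bar>j\<bar>"
  shows "1 \<le> real_of_int (max_entry (Lmat D j)) / real_of_int (min_entry (Lmat D j)) \<and>
    real_of_int (max_entry (Lmat D j)) / real_of_int (min_entry (Lmat D j)) \<le> 4 * (D + sqrt D)"
proof (cases "0 < j")
  case True
  then obtain n where j: "j = int n"
    using zero_less_imp_eq_int by blast
  then have "2 \<le> n"
    using assms by simp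
  then obtain a b c d where P: "mprodn (\<lambda>i. absM (Sseq D i)) 1 n = mat2 a b c d"
    and g: "graded_entries (2 * \<lfloor>sqrt D\<rfloor>) a b c d"
    using graded_mprodn_absM_Sseq_pos by blast
  have "absM (Lmat D j) = mat2 a b c d"
    using absM_Lmat(1)[OF True] P by (simp add: j)
  then have "max_entry (Lmat D j) = d" "min_entry (Lmat D j) = a"
    using graded_entries_Max_Min[OF g] by (simp_all add: max_min_entry_absM)
  then show ?thesis
    using graded_entries_quotient_bound[OF g] by simp
next
  case False
  then obtain n where j: "j = - int n"
    using nonneg_int_cases[of "- j"] by (metis minus_minus neg_0_le_iff_le not_less)
  then have "2 \<le> n"
    using assms by simp
  then obtain a b c d where P: "mprodn (\<lambda>i. absM (Sseq D i)) (- int n) n = mat2 a b c d"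
    and g: "graded_entries (2 * \<lfloor>sqrt D\<rfloor>) d b c a"
    using graded_mprodn_absM_Sseq_neg by blast
  have "absM (Lmat D j) = mat2 a b c d"
    using absM_Lmat(2)[of "int n"] P \<open>2 \<le> n\<close> by (simp add: j)
  moreover have "{a, b, c, d} = {d, b, c, a}"
    by auto
  ultimately have "max_entry (Lmat D j) = a" "min_entry (Lmat D j) = d"
    using graded_entries_Max_Min[OF g] by (simp_all add: max_min_entry_absM)
  then show ?thesis
    using graded_entries_quotient_bound[OF g] by simp
qed

end

theorem lemma5p2:
  fixes D :: int
  assumes "0 < D" and "\<not> (\<exists>k::int. D = k^2)"
  shows "(\<forall>j::int. 0 < j \<longrightarrow>
            (let L = Lmat D j in
              (j mod 4 = 0 \<longrightarrow> L$1$1 \<ge> 0 \<and> L$1$2 \<ge> 0 \<and> L$2$1 \<ge> 0 \<and> L$2$2 \<ge> 0) \<and>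
              (j mod 4 = 1 \<longrightarrow> L$1$1 \<le> 0 \<and> L$1$2 \<ge> 0 \<and> L$2$1 \<le> 0 \<and> L$2$2 \<ge> 0) \<and>
              (j mod 4 = 2 \<longrightarrow> L$1$1 \<le> 0 \<and> L$1$2 \<le> 0 \<and> L$2$1 \<le> 0 \<and> L$2$2 \<le> 0) \<and>
              (j mod 4 = 3 \<longrightarrow> L$1$1 \<ge> 0 \<and> L$1$2 \<le> 0 \<and> L$2$1 \<ge> 0 \<and> L$2$2 \<le> 0)))
       \<and> (\<forall>j::int. 0 < j \<longrightarrow>
            absM (Lmat D j) = mprodn (\<lambda>i. absM (Sseq D i)) 1 (nat j) \<and>
            absM (Lmat D (- j)) = mprodn (\<lambda>i. absM (Sseq D i)) (- j) (nat j))
       \<and> (\<forall>j::int. 2 \<le> \<bar>j\<bar> \<longrightarrow>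
            1 \<le> real_of_int (max_entry (Lmat D j)) / real_of_int (min_entry (Lmat D j)) \<and>
            real_of_int (max_entry (Lmat D j)) / real_of_int (min_entry (Lmat D j))
              \<le> 4 * (real_of_int D + sqrt (real_of_int D)))"
proof -
  interpret nonsquare D
    using assms by unfold_locales
  show ?thesis
    using Lmat_sign_pattern absM_Lmat Lmat_entry_ratio by blast
qed

end
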